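(* Let $q$ be a prime power and $\mathcal{C}\subseteq(\mathbb{C}^q)^{\otimes n}$ a stabilizer code with stabilizer group $S\subseteq\mathcal{P}_q^n$. Assume that for every $i\in[n]$ there exist stabilizers $P=X^\alpha Z^\beta\in S$ and $Q=X^\gamma Z^\delta\in S$ ($\alpha,\beta,\gamma,\delta\in\mathbb{F}_q^n$) with $|\mathrm{supp}(P)\cup\mathrm{supp}(Q)|\leq r$, $(\alpha_i,\beta_i)=(1,0)$ and $(\gamma_i,\delta_i)=(0,1)$. Then $\mathcal{C}$ is a quantum locally recoverable code with locality $r$.
   Context: Let $\mathbb{F}_q$ have characteristic $p$. For $a\in\mathbb{F}_q$, single-qudit Paulis on $\mathbb{C}^{\mathbb{F}_q}$: $X^a|x\rangle=|x+a\rangle$, $Z^a|x\rangle=e^{(2\pi i/p)\mathrm{tr}_{\mathbb{F}_q/\mathbb{F}_p}(ax)}|x\rangle$. For $\alpha,\beta\in\mathbb{F}_q^n$, $X^\alpha Z^\beta=\bigotimes_{j}X^{\alpha_j}Z^{\beta_j}$; $\mathcal{P}_q^n$ is the group of such operators modulo global phase (identified with $\mathbb{F}_q^{2n}$), and $\mathrm{supp}(X^\alpha Z^\beta)=\{j:(\alpha_j,\beta_j)\neq(0,0)\}$. A stabilizer code is the simultaneous $+1$-eigenspace of an abelian (all elements commuting, including phases) subgroup $S$ of $\mathcal{P}_q^n$ that is an $\mathbb{F}_q$-subspace; $S$ is its stabilizer group. A quantum code on qudits $[n]$ is locally recoverable with locality $r$ if for each $i\in[n]$ there is $I_i\subseteq[n]$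 with $i\in I_i$, $|I_i|\le r$, and a quantum channel $\mathrm{Rec}_i$ from qudits $I_i\setminus\{i\}$ to qudits $I_i$ with $(\mathrm{Rec}_i\otimes\mathrm{id}_{[n]\setminus I_i})(\psi_{[n]\setminus\{i\}})=\psi$ for every code state $\psi$, where $\psi_B$ denotes the reduced density matrix on $B$. *)

theory Defs
  imports "HOL-Analysis.Analysis"
begin

text \<open>The field F_q is a type 'a of class finite and field; its characteristic
p is CHAR('a) and q = CARD('a) = p ^ fdeg.\<close>

definition fdeg :: "'a::{finite,field} itself \<Rightarrow> nat" where
  "fdeg _ = (THE m. CHAR('a) ^ m = CARD('a))"

definition ftr :: "'a::{finite,field} \<Rightarrow> 'a" where
  "ftr x = (\<Sum>k<fdeg TYPE('a). x ^ (CHAR('a) ^ k))"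

definition prime_idx :: "'a::{finite,field} \<Rightarrow> nat" where
  "prime_idx y = (THE k. k < CHAR('a) \<and> of_nat k = y)"

definition chi :: "'a::{finite,field} \<Rightarrow> complex" where
  "chi x = exp (2 * pi * \<i> * of_nat (prime_idx (ftr x)) / of_nat CHAR('a))"

text \<open>Qudits are indexed by a finite type 'n (so n = CARD('n)).
Basis states of the full system are functions 'n \<Rightarrow> 'a; basis states of a
subsystem B are such functions vanishing outside B.\<close>

definition cfg :: "'n set \<Rightarrow> ('n \<Rightarrow> 'a::zero) set" where
  "cfg B = {x. \<forall>j. j \<notin> B \<longrightarrow> x j = 0}"

definition restr :: "'n set \<Rightarrow> ('n \<Rightarrow> 'a::zero) \<Rightarrow> ('n \<Rightarrow> 'a)" where
  "restr B x = (\<lambda>j. if j \<in> B then x j else 0)"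

definition merge :: "'n set \<Rightarrow> ('n \<Rightarrow> 'a) \<Rightarrow> ('n \<Rightarrow> 'a) \<Rightarrow> ('n \<Rightarrow> 'a)" where
  "merge B x z = (\<lambda>j. if j \<in> B then x j else z j)"

text \<open>(X^alpha Z^beta v)(y) = chi(beta . (y - alpha)) v(y - alpha),
 i.e. X^alpha Z^beta |x> = chi(beta . x) |x + alpha>.\<close>
definition pauli :: "('n::finite \<Rightarrow> 'a::{finite,field}) \<times> ('n \<Rightarrow> 'a)
     \<Rightarrow> (('n \<Rightarrow> 'a) \<Rightarrow> complex) \<Rightarrow> (('n \<Rightarrow> 'a) \<Rightarrow> complex)" where
  "pauli P v = (\<lambda>y. chi (\<Sum>j\<in>UNIV. snd P j * (y j - fst P j)) * v (\<lambda>j. y j - fst P j))"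

definition pauli_supp :: "('n \<Rightarrow> 'a::zero) \<times> ('n \<Rightarrow> 'a) \<Rightarrow> 'n set" where
  "pauli_supp P = {j. fst P j \<noteq> 0 \<or> snd P j \<noteq> 0}"

definition stabilizer_group :: "(('n::finite \<Rightarrow> 'a::{finite,field}) \<times> ('n \<Rightarrow> 'a)) set \<Rightarrow> bool" where
  "stabilizer_group S \<longleftrightarrow>
     (\<lambda>_. 0, \<lambda>_. 0) \<in> S \<and>
     (\<forall>P\<in>S. \<forall>Q\<in>S. (\<lambda>j. fst P j + fst Q j, \<lambda>j. snd P j + snd Q j) \<in> S) \<and>
     (\<forall>c. \<forall>P\<in>S. (\<lambda>j. c * fst P j, \<lambda>j. c * snd P j) \<in> S) \<and>
     (\<forall>P\<in>S. \<forall>Q\<in>S. \<forall>v. pauli P (pauli Q v) = pauli Q (pauli P v))"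

definition stab_code :: "(('n::finite \<Rightarrow> 'a::{finite,field}) \<times> ('n \<Rightarrow> 'a)) set
     \<Rightarrow> (('n \<Rightarrow> 'a) \<Rightarrow> complex) set" where
  "stab_code S = {v. \<forall>P\<in>S. pauli P v = v}"

type_synonym ('n, 'a) mat = "('n \<Rightarrow> 'a) \<Rightarrow> ('n \<Rightarrow> 'a) \<Rightarrow> complex"

definition density :: "('n::finite, 'a::{finite,field}) mat \<Rightarrow> bool" where
  "density \<psi> \<longleftrightarrow>
     (\<forall>v. Im (\<Sum>x\<in>UNIV. \<Sum>y\<in>UNIV. cnj (v x) * \<psi> x y * v y) = 0
        \<and> Re (\<Sum>x\<in>UNIV. \<Sum>y\<in>UNIV. cnj (v x) * \<psi> x y * v y) \<ge> 0)
     \<and> (\<Sum>x\<in>UNIV. \<psi> x x) = 1"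

definition code_state :: "(('n \<Rightarrow> 'a) \<Rightarrow> complex) set \<Rightarrow> ('n::finite, 'a::{finite,field}) mat \<Rightarrow> bool" where
  "code_state C \<psi> \<longleftrightarrow> density \<psi> \<and> (\<forall>y. (\<lambda>x. \<psi> x y) \<in> C)"

definition reduced :: "'n set \<Rightarrow> ('n::finite, 'a::{finite,field}) mat \<Rightarrow> ('n, 'a) mat" where
  "reduced B \<psi> = (\<lambda>x y. \<Sum>z\<in>cfg (- B). \<psi> (merge B x z) (merge B y z))"

text \<open>A quantum channel from subsystem A to subsystem B, given in Kraus form:
 operators K (entries K x y, x \<in> cfg B output, y \<in> cfg A input) with
 sum_K K^dagger K = identity on A.\<close>
definition kraus_channel :: "'n set \<Rightarrow> 'n set \<Rightarrow> ('n::finite, 'a::{finite,field}) mat list \<Rightarrow> bool" where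
  "kraus_channel A B Ks \<longleftrightarrow>
     (\<forall>y\<in>cfg A. \<forall>y'\<in>cfg A.
        (\<Sum>K\<leftarrow>Ks. \<Sum>x\<in>cfg B. cnj (K x y) * K x y') = (if y = y' then 1 else 0))"

text \<open>(Rec \<otimes> id_{[n] - I}) applied to a state sigma on [n] - {i}, where Rec
 (channel I - {i} to I) has Kraus operators Ks. Output is a state on [n].\<close>
definition apply_rec :: "'n set \<Rightarrow> 'n \<Rightarrow> ('n::finite, 'a::{finite,field}) mat list
     \<Rightarrow> ('n, 'a) mat \<Rightarrow> ('n, 'a) mat" where
  "apply_rec I i Ks \<sigma> = (\<lambda>x x'.
     \<Sum>K\<leftarrow>Ks. \<Sum>y\<in>cfg (I - {i}). \<Sum>y'\<in>cfg (I - {i}).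
        K (restr I x) y * \<sigma> (merge (I - {i}) y x) (merge (I - {i}) y' x')
          * cnj (K (restr I x') y'))"

definition locally_recoverable :: "(('n::finite \<Rightarrow> 'a::{finite,field}) \<Rightarrow> complex) set \<Rightarrow> nat \<Rightarrow> bool" where
  "locally_recoverable C r \<longleftrightarrow>
     (\<forall>i. \<exists>I. i \<in> I \<and> card I \<le> r \<and>
        (\<exists>Ks. kraus_channel (I - {i}) I Ks \<and>
           (\<forall>\<psi>. code_state C \<psi> \<longrightarrow> apply_rec I i Ks (reduced (- {i}) \<psi>) = \<psi>)))"

end

(*
  Fix a qudit i and the stabilizers P = X^alpha Z^beta and Q = X^gamma Z^delta acting on it as X and
  Z, both supported in I = supp P \<union> supp Q. The recovery channel prepares the erased qudit in a
  basis state |z> and averages over all multiples dP and cQ (c, d in F_q), which fix every code state.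
  Averaging over the Q-multiples projects the i-th entry of a code state onto z, so each Kraus
  operator K_z maps the erased state tr_i psi to psi / q and the q operators together restore psi;
  completeness sum_z K_z^dagger K_z = 1 is a counting argument. Both computations rest on the
  orthogonality sum_c chi (c a) = q [a = 0] of the additive character, which in turn needs the
  trace F_q -> F_p to take values in the prime field and not to vanish identically.
*)
theory Submission
  imports Defs "HOL-Computational_Algebra.Polynomial" "HOL-Computational_Algebra.Primes"
    "HOL-Number_Theory.Cong"
begin

section \<open>The additive character of a finite field\<close>

lemma prime_CHAR_finite_field [simp]: "prime CHAR('a::{finite,field})"
  by (rule prime_CHAR_semidom) (simp add: finite_imp_CHAR_pos)

lemma CHAR_gt_1_finite_field [simp]: "1 < CHAR('a::{finite,field})"
  using prime_gt_1_nat prime_CHAR_finite_field by blast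

lemma CHAR_pos_finite_field [simp]: "0 < CHAR('a::{finite,field})"
  by (simp add: finite_imp_CHAR_pos)

lemma power_CARD_finite_field: "(x::'a::{finite,field}) ^ CARD('a) = x"
proof (cases "x = 0")
  case False
  define U where "U = UNIV - {0::'a}"
  have "x ^ card U * (\<Prod>y\<in>U. y) = (\<Prod>y\<in>U. x * y)"
    by (simp add: prod.distrib)
  also have "\<dots> = (\<Prod>y\<in>U. y)"
    unfolding U_def using False by (intro prod.reindex_bij_witness[of _ "\<lambda>y. y / x" "\<lambda>y. x * y"]) auto
  finally have "x ^ card U = 1"
    unfolding U_def by simp
  moreover have "CARD('a) = Suc (card U)"
    unfolding U_def using finite_UNIV_card_ge_0[where 'a='a] by (simp add: card_Diff_singleton)
  ultimately show ?thesis
    by simp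
qed (simp add: zero_power)

definition add_closed :: "'a::{zero,plus} set \<Rightarrow> bool" where
  "add_closed H \<longleftrightarrow> 0 \<in> H \<and> (\<forall>a\<in>H. \<forall>b\<in>H. a + b \<in> H)"

lemma of_nat_mult_mem_add_closed:
  fixes H :: "'a::semiring_1 set"
  assumes "add_closed H" "h \<in> H"
  shows "of_nat k * h \<in> H"
  using assms by (induction k) (auto simp: add_closed_def distrib_right)

lemma uminus_mem_add_closed:
  fixes H :: "'a::{finite,field} set"
  assumes "add_closed H" "h \<in> H"
  shows "- h \<in> H"
proof -
  have "(of_nat (CHAR('a) - 1) :: 'a) = - 1"
    by (simp add: of_nat_diff Suc_leI)
  then show ?thesis
    using of_nat_mult_mem_add_closed[OF assms, of "CHAR('a) - 1"] by simp
qed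

lemma of_nat_invertible_below_CHAR:
  assumes "0 < d" "d < CHAR('a::{finite,field})"
  obtains e where "of_nat e * of_nat d = (1::'a)"
proof -
  have "coprime d CHAR('a)"
    using assms by (metis coprime_commute dvd_imp_le not_less prime_CHAR_finite_field prime_imp_coprime)
  then obtain e where "[d * e = 1] (mod CHAR('a))"
    using cong_solve_coprime_nat[of d] by auto
  then have "of_nat (d * e) = (of_nat 1 :: 'a)"
    by (simp only: of_nat_eq_iff_cong_CHAR)
  then show ?thesis
    using that by (simp add: mult.commute)
qed

text \<open>Adjoining the \<open>F_p\<close>-multiples of an element outside an additive subgroup multiplies its
  size by \<open>p\<close>; starting from \<open>{0}\<close> this shows that \<open>q\<close> is a power of \<open>p\<close>, as \<^const>\<open>fdeg\<close>
  presupposes.\<close>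
definition adjoin_multiples :: "'a::{finite,field} set \<Rightarrow> 'a \<Rightarrow> 'a set" where
  "adjoin_multiples H x = (\<lambda>(h, k). h + of_nat k * x) ` (H \<times> {..<CHAR('a)})"

lemma add_closed_adjoin_multiples:
  assumes "add_closed H"
  shows "add_closed (adjoin_multiples H x)"
  unfolding add_closed_def
proof (intro conjI ballI)
  show "0 \<in> adjoin_multiples H x"
    unfolding adjoin_multiples_def using assms
    by (intro rev_image_eqI[of "(0, 0)"]) (auto simp: add_closed_def)
next
  fix a b
  assume "a \<in> adjoin_multiples H x" "b \<in> adjoin_multiples H x"
  then obtain h1 k1 h2 k2 where a: "a = h1 + of_nat k1 * x" "h1 \<in> H"
    and b: "b = h2 + of_nat k2 * x" "h2 \<in> H"
    unfolding adjoin_multiples_def by auto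
  have "a + b = (h1 + h2) + of_nat (k1 + k2) * x"
    by (simp add: a b algebra_simps)
  also have "(of_nat (k1 + k2) :: 'a) = of_nat ((k1 + k2) mod CHAR('a))"
    by (simp only: of_nat_eq_iff_cong_CHAR) (simp add: cong_def)
  finally show "a + b \<in> adjoin_multiples H x"
    unfolding adjoin_multiples_def using a b assms
    by (intro rev_image_eqI[of "(h1 + h2, (k1 + k2) mod CHAR('a))"]) (auto simp: add_closed_def)
qed

lemma insert_subset_adjoin_multiples:
  fixes H :: "'a::{finite,field} set"
  assumes "0 \<in> H"
  shows "insert x H \<subseteq> adjoin_multiples H x"
proof -
  have "x \<in> adjoin_multiples H x"
    unfolding adjoin_multiples_def using assms CHAR_gt_1_finite_field[where 'a='a]
    by (intro rev_image_eqI[of "(0, 1)"]) auto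
  moreover have "h \<in> adjoin_multiples H x" if "h \<in> H" for h
    unfolding adjoin_multiples_def using that by (intro rev_image_eqI[of "(h, 0)"]) auto
  ultimately show ?thesis
    by blast
qed

lemma card_adjoin_multiples:
  fixes H :: "'a::{finite,field} set"
  assumes H: "add_closed H" and x: "x \<notin> H"
  shows "card (adjoin_multiples H x) = card H * CHAR('a)"
proof -
  have same_multiple: "k1 = k2"
    if "h1 \<in> H" "h2 \<in> H" "k2 \<le> k1" "k1 < CHAR('a)" "h1 + of_nat k1 * x = h2 + of_nat k2 * x"
    for h1 h2 k1 k2
  proof (rule ccontr)
    assume "k1 \<noteq> k2"
    with that obtain e where e: "of_nat e * of_nat (k1 - k2) = (1::'a)"
      using of_nat_invertible_below_CHAR[of "k1 - k2"]
      by (metis diff_le_self le_less_trans zero_less_diff le_neq_implies_less)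
    have "of_nat (k1 - k2) * x = h2 + - h1"
      using that by (simp add: algebra_simps)
    then have "of_nat (k1 - k2) * x \<in> H"
      using that H uminus_mem_add_closed[OF H] by (metis add_closed_def)
    then have "of_nat e * (of_nat (k1 - k2) * x) \<in> H"
      by (rule of_nat_mult_mem_add_closed[OF H])
    with e x show False
      by (simp flip: mult.assoc)
  qed
  have "inj_on (\<lambda>(h, k). h + of_nat k * x) (H \<times> {..<CHAR('a)})"
  proof (rule inj_onI, clarsimp)
    fix h1 k1 h2 k2
    assume "h1 \<in> H" "h2 \<in> H" "k1 < CHAR('a)" "k2 < CHAR('a)"
      and eq: "h1 + of_nat k1 * x = h2 + of_nat k2 * x"
    then have "k1 = k2"
      using same_multiple[of h1 h2 k2 k1] same_multiple[of h2 h1 k1 k2] by fastforce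
    with eq show "h1 = h2 \<and> k1 = k2"
      by simp
  qed
  then show ?thesis
    unfolding adjoin_multiples_def by (simp add: card_image card_cartesian_product)
qed

lemma CARD_eq_CHAR_power_of_subgroup:
  fixes H :: "'a::{finite,field} set"
  assumes "add_closed H" "card H = CHAR('a) ^ k"
  shows "\<exists>m. CARD('a) = CHAR('a) ^ m"
  using assms
proof (induction "card (- H)" arbitrary: H k rule: less_induct)
  case less
  show ?case
  proof (cases "H = UNIV")
    case True
    with less.prems show ?thesis
      by auto
  next
    case False
    then obtain x where x: "x \<notin> H"
      by blast
    have "card (- adjoin_multiples H x) < card (- H)"
      using insert_subset_adjoin_multiples[of H x] less.prems(1) x
      by (intro psubset_card_mono) (auto simp: add_closed_def)
    moreover have "card (adjoin_multiples H x) = CHAR('a) ^ Suc k"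
      using card_adjoin_multiples[OF less.prems(1) x] less.prems(2) by simp
    ultimately show ?thesis
      using less.hyps add_closed_adjoin_multiples[OF less.prems(1)] by blast
  qed
qed

lemma CARD_eq_CHAR_power: "\<exists>m. CARD('a::{finite,field}) = CHAR('a) ^ m"
  by (rule CARD_eq_CHAR_power_of_subgroup[of "{0}" 0]) (auto simp: add_closed_def)

lemma CHAR_power_fdeg: "CHAR('a) ^ fdeg TYPE('a::{finite,field}) = CARD('a)"
proof -
  obtain m where m: "CARD('a) = CHAR('a) ^ m"
    using CARD_eq_CHAR_power by blast
  have "fdeg TYPE('a) = m"
    unfolding fdeg_def
    by (rule the_equality) (use m power_inject_exp[OF CHAR_gt_1_finite_field[where 'a='a]] in auto)
  with m show ?thesis
    by simp
qed

lemma ftr_add: "ftr (x + y) = ftr x + ftr (y::'a::{finite,field})"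
  unfolding ftr_def by (simp add: freshmans_dream'[OF prime_CHAR_finite_field refl] sum.distrib)

lemma ftr_power_CHAR: "ftr (x::'a::{finite,field}) ^ CHAR('a) = ftr x"
proof -
  define f where "f k = x ^ (CHAR('a) ^ k)" for k
  have "f (fdeg TYPE('a)) = f 0"
    unfolding f_def by (simp add: CHAR_power_fdeg power_CARD_finite_field)
  have "ftr x ^ CHAR('a) = (\<Sum>k<fdeg TYPE('a). f (Suc k))"
    unfolding ftr_def f_def
    by (simp add: freshmans_dream_sum[OF prime_CHAR_finite_field refl] mult.commute flip: power_mult)
  also have "\<dots> = (\<Sum>k<fdeg TYPE('a). f k)"
    using sum.lessThan_Suc_shift[of f "fdeg TYPE('a)"] sum.lessThan_Suc[of f "fdeg TYPE('a)"]
      \<open>f (fdeg TYPE('a)) = f 0\<close> by (simp add: add.commute)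
  finally show ?thesis
    unfolding ftr_def f_def .
qed

lemma of_nat_inj_below_CHAR: "inj_on (of_nat :: nat \<Rightarrow> 'a::{finite,field}) {..<CHAR('a)}"
  by (rule inj_onI) (auto simp: of_nat_eq_iff_cong_CHAR cong_def)

text \<open>The \<open>p\<close> distinct elements \<open>of_nat k\<close>, \<open>k < p\<close>, are roots of \<open>X^p - X\<close>, so they are all
  of its roots.\<close>
lemma Frobenius_fixed_imp_of_nat:
  assumes "(y::'a::{finite,field}) ^ CHAR('a) = y"
  shows "\<exists>k<CHAR('a). of_nat k = y"
proof -
  define R where "R = {z::'a. z ^ CHAR('a) = z}"
  define f :: "'a poly" where "f = monom 1 CHAR('a) - [:0, 1:]"
  have R_eq: "R = {z. poly f z = 0}"
    by (simp add: R_def f_def poly_monom)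
  have "coeff f CHAR('a) = 1"
    using CHAR_gt_1_finite_field[where 'a='a] by (simp add: f_def coeff_pCons split: nat.split)
  then have "f \<noteq> 0"
    by auto
  moreover have "degree f \<le> CHAR('a)"
    unfolding f_def using CHAR_gt_1_finite_field[where 'a='a]
    by (intro order.trans[OF degree_diff_le_max]) (auto simp: degree_monom_le)
  ultimately have card_R: "card R \<le> CHAR('a)"
    unfolding R_eq using card_poly_roots_bound[of f] by linarith
  have "(of_nat k :: 'a) ^ CHAR('a) = of_nat k" for k
    using freshmans_dream_sum[OF prime_CHAR_finite_field refl, of "\<lambda>_. 1::'a" "{..<k}"] by simp
  then have sub: "of_nat ` {..<CHAR('a)} \<subseteq> R"
    unfolding R_def by auto
  have "card (of_nat ` {..<CHAR('a)} :: 'a set) = CHAR('a)"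
    using card_image[OF of_nat_inj_below_CHAR] by simp
  with card_R card_mono[OF _ sub] have "card (of_nat ` {..<CHAR('a)} :: 'a set) = card R"
    by simp
  then have "of_nat ` {..<CHAR('a)} = R"
    by (rule card_subset_eq[OF _ sub, rotated]) simp
  moreover have "y \<in> R"
    using assms by (simp add: R_def)
  ultimately show ?thesis
    by (metis imageE lessThan_iff)
qed

lemma prime_idx_of_nat:
  assumes "k < CHAR('a::{finite,field})"
  shows "prime_idx (of_nat k :: 'a) = k"
  unfolding prime_idx_def
  by (rule the_equality) (use assms in \<open>auto simp: of_nat_eq_iff_cong_CHAR cong_def\<close>)

lemma prime_idx_ftr:
  fixes x :: "'a::{finite,field}"
  shows "prime_idx (ftr x) < CHAR('a)" and "of_nat (prime_idx (ftr x)) = ftr x"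
proof -
  obtain k where k: "k < CHAR('a)" "of_nat k = ftr x"
    using Frobenius_fixed_imp_of_nat[OF ftr_power_CHAR] by blast
  then have "prime_idx (ftr x) = k"
    using prime_idx_of_nat[OF k(1)] by simp
  with k show "prime_idx (ftr x) < CHAR('a)" "of_nat (prime_idx (ftr x)) = ftr x"
    by simp_all
qed

text \<open>The trace is a nonzero polynomial of degree \<open>p ^ (m - 1) < q\<close>, so it has a non-root.\<close>
lemma ex_ftr_nonzero: "\<exists>x::'a::{finite,field}. ftr x \<noteq> 0"
proof (rule ccontr)
  assume "\<not> (\<exists>x::'a. ftr x \<noteq> 0)"
  then have all_roots: "ftr x = 0" for x :: 'a
    by auto
  let ?p = "CHAR('a)" and ?m = "fdeg TYPE('a)"
  have "card {0::'a, 1} \<le> CARD('a)"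
    by (rule card_mono) simp_all
  then have "?m \<noteq> 0"
    using CHAR_power_fdeg[where 'a='a] by (cases ?m) auto
  define f :: "'a poly" where "f = (\<Sum>k<?m. monom 1 (?p ^ k))"
  have "coeff f (?p ^ (?m - 1)) = (\<Sum>k<?m. if ?p ^ k = ?p ^ (?m - 1) then 1 else 0)"
    unfolding f_def by (simp add: coeff_sum coeff_monom)
  also have "\<dots> = (\<Sum>k<?m. if k = ?m - 1 then 1 else 0)"
    using CHAR_gt_1_finite_field[where 'a='a] by (simp add: power_inject_exp)
  also have "\<dots> = 1"
    using \<open>?m \<noteq> 0\<close> by simp
  finally have "f \<noteq> 0"
    by auto
  then have "card {x. poly f x = 0} \<le> degree f"
    by (rule card_poly_roots_bound)
  also have "degree f \<le> ?p ^ (?m - 1)"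
    unfolding f_def using CHAR_gt_1_finite_field[where 'a='a]
    by (intro degree_sum_le) (auto simp: degree_monom_eq intro: power_increasing)
  also have "\<dots> < ?p ^ ?m"
    using \<open>?m \<noteq> 0\<close> CHAR_gt_1_finite_field[where 'a='a] by (intro power_strict_increasing) auto
  also have "\<dots> = CARD('a)"
    by (rule CHAR_power_fdeg)
  also have "{x. poly f x = 0} = UNIV"
    using all_roots unfolding f_def ftr_def by (simp add: poly_sum poly_monom)
  finally show False
    by simp
qed

lemma exp_2pi_i_div_cong:
  assumes "[k = l] (mod n)"
  shows "exp (2 * pi * \<i> * of_nat k / of_nat n) = exp (2 * pi * \<i> * of_nat l / of_nat n)"
proof (cases "n = 0")
  case True
  with assms show ?thesis
    by (simp add: cong_def)
next
  case False
  from assms obtain t :: int where "int l = int k + int n * t"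
    by (metis cong_iff_lin cong_int_iff)
  then have "of_nat l = (of_nat k + of_nat n * of_int t :: complex)"
    by (metis of_int_add of_int_mult of_int_of_nat_eq)
  with False have "2 * pi * \<i> * of_nat l / of_nat n
      = 2 * pi * \<i> * of_nat k / of_nat n + (of_int (2 * t) * pi) * \<i>"
    by (simp add: field_simps)
  then have "exp (2 * pi * \<i> * of_nat l / of_nat n) = exp (2 * pi * \<i> * of_nat k / of_nat n)"
    unfolding exp_eq by blast
  then show ?thesis
    by (rule sym)
qed

lemma chi_add: "chi (a + b) = chi a * chi (b::'a::{finite,field})"
proof -
  have "of_nat (prime_idx (ftr (a + b))) = ftr (a + b)"
    by (rule prime_idx_ftr)
  also have "\<dots> = of_nat (prime_idx (ftr a) + prime_idx (ftr b))"
    by (simp add: prime_idx_ftr ftr_add)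
  finally have "[prime_idx (ftr (a + b)) = prime_idx (ftr a) + prime_idx (ftr b)] (mod CHAR('a))"
    by (simp only: of_nat_eq_iff_cong_CHAR)
  then have "chi (a + b) = exp (2 * pi * \<i> * of_nat (prime_idx (ftr a) + prime_idx (ftr b)) / of_nat CHAR('a))"
    unfolding chi_def by (rule exp_2pi_i_div_cong)
  then show ?thesis
    by (simp add: chi_def add_divide_distrib distrib_left exp_add)
qed

lemma norm_chi [simp]: "norm (chi x) = 1"
  by (simp add: chi_def)

lemma chi_zero [simp]: "chi (0::'a::{finite,field}) = 1"
proof -
  have "chi (0::'a) \<noteq> 0"
    by (metis norm_chi norm_zero zero_neq_one)
  then show ?thesis
    using chi_add[of "0::'a" 0] by simp
qed

lemma cnj_chi: "cnj (chi x) = chi (- x)"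
proof -
  have "cnj (chi x) * chi x = 1"
    using complex_norm_square[of "chi x"] by (simp add: mult.commute)
  moreover have "chi (- x) * chi x = 1"
    by (simp flip: chi_add)
  ultimately show ?thesis
    by (metis mult.assoc mult.commute mult_1_left mult_1_right)
qed

lemma ex_chi_neq_1: "\<exists>x::'a::{finite,field}. chi x \<noteq> 1"
proof -
  obtain x :: 'a where x: "ftr x \<noteq> 0"
    using ex_ftr_nonzero by blast
  define k where "k = prime_idx (ftr x)"
  have k: "0 < k" "k < CHAR('a)"
    using prime_idx_ftr[of x] x unfolding k_def by (auto intro!: gr0I)
  have "chi x \<noteq> 1"
  proof
    assume "chi x = 1"
    then obtain n :: int where "2 * pi * real k / real CHAR('a) = 2 * real_of_int n * pi"
      unfolding chi_def k_def[symmetric] exp_eq_1 by auto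
    then have "real k = real_of_int n * real CHAR('a)"
      by (simp add: field_simps)
    then have "int k = n * int CHAR('a)"
      by (metis of_int_eq_iff of_int_mult of_int_of_nat_eq)
    then have "CHAR('a) dvd k"
      by (metis dvd_triv_right int_dvd_int_iff)
    with k show False
      by (auto dest: dvd_imp_le)
  qed
  then show ?thesis ..
qed

lemma sum_chi_mult:
  "(\<Sum>c\<in>UNIV. chi (c * (a::'a::{finite,field}))) = (if a = 0 then of_nat CARD('a) else 0)"
proof (cases "a = 0")
  case False
  obtain b :: 'a where b: "chi b \<noteq> 1"
    using ex_chi_neq_1 by blast
  have "chi b * (\<Sum>c\<in>UNIV. chi (c::'a)) = (\<Sum>c\<in>UNIV. chi (c + b))"
    by (simp add: chi_add sum_distrib_left mult.commute)
  also have "\<dots> = (\<Sum>c\<in>UNIV. chi (c::'a))"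
    by (rule sum.reindex_bij_witness[of _ "\<lambda>c. c - b" "\<lambda>c. c + b"]) auto
  finally have "(1 - chi b) * (\<Sum>c\<in>UNIV. chi (c::'a)) = 0"
    by (simp add: left_diff_distrib)
  with b have "(\<Sum>c\<in>UNIV. chi (c::'a)) = 0"
    by simp
  moreover have "(\<Sum>c\<in>UNIV. chi (c * a)) = (\<Sum>c\<in>UNIV. chi (c::'a))"
    by (rule sum.reindex_bij_witness[of _ "\<lambda>c. c / a" "\<lambda>c. c * a"]) (use False in auto)
  ultimately show ?thesis
    using False by simp
qed simp

section \<open>Density matrices are Hermitian\<close>

lemma quadratic_form_two_points:
  fixes \<psi> :: "('n::finite, 'a::{finite,field}) mat"
    and a b :: "'n \<Rightarrow> 'a" and c :: complex
  defines "v \<equiv> \<lambda>w. (if w = a then 1 else 0) + (if w = b then c else 0)"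
  shows "(\<Sum>x\<in>UNIV. \<Sum>y\<in>UNIV. cnj (v x) * \<psi> x y * v y)
       = \<psi> a a + c * \<psi> a b + cnj c * \<psi> b a + cnj c * c * \<psi> b b"
proof -
  have "(\<Sum>y\<in>UNIV. cnj (v x) * \<psi> x y * v y) = cnj (v x) * (\<psi> x a + c * \<psi> x b)" for x
    by (simp add: v_def algebra_simps sum.distrib if_distrib[of "\<lambda>z. _ * z"] cong: if_cong)
  then have "(\<Sum>x\<in>UNIV. \<Sum>y\<in>UNIV. cnj (v x) * \<psi> x y * v y)
      = (\<Sum>x\<in>UNIV. cnj (v x) * (\<psi> x a + c * \<psi> x b))"
    by simp
  also have "\<dots> = \<psi> a a + c * \<psi> a b + cnj c * \<psi> b a + cnj c * c * \<psi> b b"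
    by (simp add: v_def algebra_simps sum.distrib if_distrib[of "\<lambda>z. _ * z"] if_distrib[of "\<lambda>z. z * _"]
        if_distrib[of cnj] cong: if_cong)
  finally show ?thesis .
qed

lemma density_hermitian:
  fixes \<psi> :: "('n::finite, 'a::{finite,field}) mat"
  assumes "density \<psi>"
  shows "\<psi> b a = cnj (\<psi> a b)"
proof -
  have "Im (\<Sum>x\<in>UNIV. \<Sum>y\<in>UNIV. cnj (v x) * \<psi> x y * v y) = 0" for v
    using assms unfolding density_def by blast
  then have real_form: "Im (\<psi> a' a' + c * \<psi> a' b' + cnj c * \<psi> b' a' + cnj c * c * \<psi> b' b') = 0" for a' b' c
    by (simp only: flip: quadratic_form_two_points)
  have "Im (\<psi> a a) = 0" "Im (\<psi> b b) = 0"
    using real_form[where a'=a and b'=a and c=0] real_form[where a'=b and b'=b and c=0] by simp_all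
  moreover have "Im (\<psi> a b) + Im (\<psi> b a) = 0" "Re (\<psi> a b) - Re (\<psi> b a) = 0"
    using real_form[where a'=a and b'=b and c=1] real_form[where a'=a and b'=b and c=\<i>] calculation
    by simp_all
  ultimately show ?thesis
    by (simp add: complex_eq_iff)
qed

section \<open>Recovering an erased qudit\<close>

lemma finite_cfg [simp]: "finite (cfg B :: ('n::finite \<Rightarrow> 'a::{finite,zero}) set)"
  by (rule finite_subset[OF subset_UNIV]) simp

lemma sum_cfg_singleton:
  "(\<Sum>t\<in>cfg {i}. if (t::'n::finite \<Rightarrow> 'a::{finite,field}) i = z then f else 0) = f"
proof -
  have "{t \<in> cfg {i}. t i = z} = {\<lambda>j. if j = i then z else 0}"
    by (auto simp: cfg_def)
  then show ?thesis
    by (simp add: sum.If_cases Int_def)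
qed

definition scale_pauli :: "'a::times \<Rightarrow> ('n \<Rightarrow> 'a) \<times> ('n \<Rightarrow> 'a) \<Rightarrow> ('n \<Rightarrow> 'a) \<times> ('n \<Rightarrow> 'a)" where
  "scale_pauli c P = (\<lambda>j. c * fst P j, \<lambda>j. c * snd P j)"

lemma scale_pauli_mem_stabilizer_group:
  "stabilizer_group S \<Longrightarrow> P \<in> S \<Longrightarrow> scale_pauli c P \<in> S"
  by (simp add: stabilizer_group_def scale_pauli_def)

lemma pauli_stab_code: "v \<in> stab_code S \<Longrightarrow> P \<in> S \<Longrightarrow> pauli P v = v"
  by (simp add: stab_code_def)

lemma pauli_fixed_shift:
  assumes "pauli (scale_pauli c (\<alpha>, \<beta>)) g = g"
  shows "g y = chi (\<Sum>j\<in>UNIV. (c * \<beta> j) * (y j - c * \<alpha> j)) * g (\<lambda>j. y j - c * \<alpha> j)"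
  using fun_cong[OF assms, of y] by (simp add: pauli_def scale_pauli_def)

locale XZ_pair_at =
  fixes I :: "'n::finite set" and i :: 'n and \<alpha> \<beta> \<gamma> \<delta> :: "'n \<Rightarrow> 'a::{finite,field}"
  assumes i_in_I: "i \<in> I"
    and X_at_i: "\<alpha> i = 1" "\<beta> i = 0"
    and Z_at_i: "\<gamma> i = 0" "\<delta> i = 1"
    and supported: "pauli_supp (\<alpha>, \<beta>) \<union> pauli_supp (\<gamma>, \<delta>) \<subseteq> I"
begin

lemma vanish_outside: "j \<notin> I \<Longrightarrow> \<alpha> j = 0 \<and> \<beta> j = 0 \<and> \<gamma> j = 0 \<and> \<delta> j = 0"
  using supported by (auto simp: pauli_supp_def)

definition strip :: "'a \<Rightarrow> ('n \<Rightarrow> 'a) \<Rightarrow> 'n \<Rightarrow> 'a" where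
  "strip z x = (\<lambda>j. x j - (x i - z) * \<alpha> j - (if j = i then z else 0))"

text \<open>With \<open>P = X^\<alpha> Z^\<beta>\<close> and \<open>Q = X^\<gamma> Z^\<delta>\<close> this is the matrix of
  \<open>K_z = q^(-3/2) \<Sum>c d. (d P) (c Q) (|z\<rangle>_i \<otimes> id)\<close>: for output \<open>x\<close> only \<open>d = x i - z\<close>
  contributes, and then the input \<open>u\<close> satisfies \<open>u + c \<gamma> = strip z x\<close>.\<close>
definition recovery_kraus :: "'a \<Rightarrow> ('n, 'a) mat" where
  "recovery_kraus z x u =
     chi (\<Sum>j\<in>UNIV. ((x i - z) * \<beta> j) * (x j - (x i - z) * \<alpha> j))
       / (of_real (sqrt (real CARD('a))) * of_nat CARD('a))
     * (\<Sum>c\<in>UNIV. chi (c * z + c * (\<Sum>j\<in>UNIV. \<delta> j * u j))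
          * (if u = (\<lambda>j. strip z x j - c * \<gamma> j) then 1 else 0))"

lemma strip_shift_mem_cfg:
  assumes "x \<in> cfg I"
  shows "(\<lambda>j. strip z x j - c * \<gamma> j) \<in> cfg (I - {i})"
  using assms vanish_outside by (auto simp: cfg_def strip_def X_at_i Z_at_i)

lemma sum_recovery_kraus:
  assumes "x \<in> cfg I"
  shows "(\<Sum>u\<in>cfg (I - {i}). recovery_kraus z x u * h u)
       = chi (\<Sum>j\<in>UNIV. ((x i - z) * \<beta> j) * (x j - (x i - z) * \<alpha> j))
           / (of_real (sqrt (real CARD('a))) * of_nat CARD('a))
         * (\<Sum>c\<in>UNIV. chi (c * z + c * (\<Sum>j\<in>UNIV. \<delta> j * (strip z x j - c * \<gamma> j)))
              * h (\<lambda>j. strip z x j - c * \<gamma> j))"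
proof -
  have "(\<Sum>u\<in>cfg (I - {i}). (\<Sum>c\<in>UNIV. chi (c * z + c * (\<Sum>j\<in>UNIV. \<delta> j * u j))
          * (if u = (\<lambda>j. strip z x j - c * \<gamma> j) then 1 else 0)) * h u)
      = (\<Sum>c\<in>UNIV. \<Sum>u\<in>cfg (I - {i}). if u = (\<lambda>j. strip z x j - c * \<gamma> j)
          then chi (c * z + c * (\<Sum>j\<in>UNIV. \<delta> j * u j)) * h u else 0)"
    by (subst sum.swap) (simp add: sum_distrib_right if_distrib[of "\<lambda>z. _ * z"]
        if_distrib[of "\<lambda>z. z * _"] cong: if_cong)
  also have "\<dots> = (\<Sum>c\<in>UNIV. chi (c * z + c * (\<Sum>j\<in>UNIV. \<delta> j * (strip z x j - c * \<gamma> j)))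
      * h (\<lambda>j. strip z x j - c * \<gamma> j))"
    using strip_shift_mem_cfg[OF assms] by (simp add: sum.delta')
  finally show ?thesis
    unfolding recovery_kraus_def by (simp only: mult.assoc flip: sum_distrib_left)
qed

lemma Q_shift_phase:
  fixes g :: "('n \<Rightarrow> 'a) \<Rightarrow> complex"
  assumes Q_fixes: "\<And>c. pauli (scale_pauli c (\<gamma>, \<delta>)) g = g"
    and s_i: "s i = 0" and s_Y: "\<And>j. j \<in> I \<Longrightarrow> j \<noteq> i \<Longrightarrow> s j = Y j"
  shows "chi (c * z + c * (\<Sum>j\<in>UNIV. \<delta> j * (s j - c * \<gamma> j))) * g (\<lambda>j. Y j - c * \<gamma> j)
       = chi (c * (z - Y i)) * g Y"
proof -
  define A where "A = (\<Sum>j\<in>UNIV. (c * \<delta> j) * (Y j - c * \<gamma> j))"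
  have "(c * \<delta> j) * (Y j - c * \<gamma> j) = (if j = i then c * Y i else 0) + c * (\<delta> j * (s j - c * \<gamma> j))"
    for j
  proof (cases "j \<in> I")
    case True
    then show ?thesis
      using s_Y[OF True] by (cases "j = i") (simp_all add: s_i Z_at_i algebra_simps)
  next
    case False
    then show ?thesis
      using vanish_outside[OF False] i_in_I by auto
  qed
  then have "A = (\<Sum>j\<in>UNIV. (if j = i then c * Y i else 0) + c * (\<delta> j * (s j - c * \<gamma> j)))"
    unfolding A_def by simp
  then have A: "A = c * Y i + c * (\<Sum>j\<in>UNIV. \<delta> j * (s j - c * \<gamma> j))"
    by (simp add: sum.distrib sum_distrib_left)
  have "g Y = chi A * g (\<lambda>j. Y j - c * \<gamma> j)"
    unfolding A_def by (rule pauli_fixed_shift[OF Q_fixes])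
  then have shifted: "g (\<lambda>j. Y j - c * \<gamma> j) = chi (- A) * g Y"
    by (simp add: mult.assoc[symmetric] flip: chi_add)
  have "chi (c * z + c * (\<Sum>j\<in>UNIV. \<delta> j * (s j - c * \<gamma> j))) * chi (- A) = chi (c * (z - Y i))"
    by (simp add: A algebra_simps flip: chi_add)
  then show ?thesis
    by (simp add: shifted mult.assoc[symmetric])
qed

lemma recovery_kraus_column:
  fixes g :: "('n \<Rightarrow> 'a) \<Rightarrow> complex"
  assumes P_fixes: "\<And>c. pauli (scale_pauli c (\<alpha>, \<beta>)) g = g"
    and Q_fixes: "\<And>c. pauli (scale_pauli c (\<gamma>, \<delta>)) g = g"
  shows "(\<Sum>u\<in>cfg (I - {i}). recovery_kraus z (restr I x) u * g (merge (- {i}) (merge (I - {i}) u x) t))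
       = (if t i = z then g x / of_real (sqrt (real CARD('a))) else 0)"
proof -
  define X where "X = restr I x"
  define d where "d = x i - z"
  define Y where "Y = (\<lambda>j. x j - d * \<alpha> j + (if j = i then t i - z else 0))"
  define N :: complex where "N = of_real (sqrt (real CARD('a))) * of_nat CARD('a)"
  define ph where "ph = chi (\<Sum>j\<in>UNIV. (d * \<beta> j) * (x j - d * \<alpha> j))"
  have X: "X \<in> cfg I" "X i = x i"
    using i_in_I by (auto simp: X_def restr_def cfg_def)
  have phase: "chi (\<Sum>j\<in>UNIV. ((X i - z) * \<beta> j) * (X j - (X i - z) * \<alpha> j)) = ph"
    unfolding ph_def X(2) d_def[symmetric]
    by (rule arg_cong[where f = chi], rule sum.cong) (auto simp: X_def restr_def dest: vanish_outside)
  have merge_eq: "merge (- {i}) (merge (I - {i}) (\<lambda>j. strip z X j - c * \<gamma> j) x) t = (\<lambda>j. Y j - c * \<gamma> j)"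
    for c
    using vanish_outside i_in_I
    by (intro ext) (auto simp: merge_def strip_def Y_def X_def restr_def d_def X_at_i Z_at_i)
  have "chi (c * z + c * (\<Sum>j\<in>UNIV. \<delta> j * (strip z X j - c * \<gamma> j))) * g (\<lambda>j. Y j - c * \<gamma> j)
      = chi (c * (z - t i)) * g Y" for c
    using Q_shift_phase[OF Q_fixes, of "strip z X" Y c z] X
    by (simp add: strip_def Y_def X_def restr_def d_def X_at_i)
  then have "(\<Sum>u\<in>cfg (I - {i}). recovery_kraus z X u * g (merge (- {i}) (merge (I - {i}) u x) t))
      = ph / N * ((\<Sum>c\<in>UNIV. chi (c * (z - t i))) * g Y)"
    by (simp add: sum_recovery_kraus[OF X(1)] phase merge_eq N_def sum_distrib_right)
  also have "\<dots> = (if t i = z then g x / of_real (sqrt (real CARD('a))) else 0)"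
  proof (cases "t i = z")
    case True
    then have "Y = (\<lambda>j. x j - d * \<alpha> j)"
      by (intro ext) (simp add: Y_def)
    then have "g x = ph * g Y"
      unfolding ph_def by (rule ssubst) (rule pauli_fixed_shift[OF P_fixes])
    with True show ?thesis
      by (simp add: sum_chi_mult N_def)
  qed (simp add: sum_chi_mult)
  finally show ?thesis
    unfolding X_def .
qed

lemma card_strip_preimage:
  assumes "v \<in> cfg (I - {i})"
  shows "card {x \<in> cfg I. strip z x = v} = CARD('a)"
proof -
  define h where "h s = (\<lambda>j. v j + (s - z) * \<alpha> j + (if j = i then z else 0))" for s
  have v: "v i = 0" "\<And>j. j \<notin> I \<Longrightarrow> v j = 0"
    using assms by (auto simp: cfg_def)
  have "h s i = s" for s
    by (simp add: h_def v X_at_i)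
  then have "inj h"
    by (metis injI)
  moreover have "range h = {x \<in> cfg I. strip z x = v}"
  proof (intro equalityI subsetI)
    fix x
    assume "x \<in> range h"
    then show "x \<in> {x \<in> cfg I. strip z x = v}"
      using v vanish_outside i_in_I by (auto simp: h_def cfg_def strip_def X_at_i)
  next
    fix x
    assume "x \<in> {x \<in> cfg I. strip z x = v}"
    then have "x = h (x i)"
      by (auto simp: h_def strip_def)
    then show "x \<in> range h"
      by blast
  qed
  ultimately show ?thesis
    by (metis card_image)
qed

lemma cnj_kraus_summand_mult:
  fixes s y y' :: "'n \<Rightarrow> 'a"
  shows "cnj (chi (c * z + c * dy) * (if y = (\<lambda>j. s j - c * \<gamma> j) then 1 else 0))
        * (chi (c' * z + c' * dy') * (if y' = (\<lambda>j. s j - c' * \<gamma> j) then 1 else 0))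
      = chi (z * (c' - c)) * chi (c' * dy' - c * dy)
        * (if s = (\<lambda>j. y j + c * \<gamma> j) then 1 else 0)
        * (if y' = (\<lambda>j. y j + (c - c') * \<gamma> j) then 1 else 0)"
proof -
  have indicators: "cnj (u * (if A then 1 else 0)) * (v * (if B then 1 else 0))
      = k * (if A' then 1 else 0) * (if B' then 1 else 0)"
    if "A \<and> B \<longleftrightarrow> A' \<and> B'" "cnj u * v = k" for u v k :: complex and A B A' B'
    using that by auto
  show ?thesis
  proof (rule indicators)
    show "cnj (chi (c * z + c * dy)) * chi (c' * z + c' * dy') = chi (z * (c' - c)) * chi (c' * dy' - c * dy)"
      unfolding cnj_chi chi_add[symmetric] by (rule arg_cong[where f = chi]) (simp add: algebra_simps)
    show "(y = (\<lambda>j. s j - c * \<gamma> j) \<and> y' = (\<lambda>j. s j - c' * \<gamma> j))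
        \<longleftrightarrow> (s = (\<lambda>j. y j + c * \<gamma> j) \<and> y' = (\<lambda>j. y j + (c - c') * \<gamma> j))"
      by (auto simp: fun_eq_iff algebra_simps)
  qed
qed

lemma cnj_recovery_kraus_mult:
  fixes y y' :: "'n \<Rightarrow> 'a"
  defines "dy \<equiv> \<Sum>j\<in>UNIV. \<delta> j * y j" and "dy' \<equiv> \<Sum>j\<in>UNIV. \<delta> j * y' j"
  shows "cnj (recovery_kraus z x y) * recovery_kraus z x y'
    = (\<Sum>c\<in>UNIV. \<Sum>c'\<in>UNIV. chi (z * (c' - c)) * chi (c' * dy' - c * dy)
        * (if strip z x = (\<lambda>j. y j + c * \<gamma> j) then 1 else 0)
        * (if y' = (\<lambda>j. y j + (c - c') * \<gamma> j) then 1 else 0)) / of_nat CARD('a) ^ 3"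
proof -
  define ph where "ph = chi (\<Sum>j\<in>UNIV. ((x i - z) * \<beta> j) * (x j - (x i - z) * \<alpha> j))"
  define N :: complex where "N = of_real (sqrt (real CARD('a))) * of_nat CARD('a)"
  define S where "S u = (\<Sum>c\<in>UNIV. chi (c * z + c * (\<Sum>j\<in>UNIV. \<delta> j * u j))
      * (if u = (\<lambda>j. strip z x j - c * \<gamma> j) then 1 else 0))" for u
  have K: "recovery_kraus z x u = ph / N * S u" for u
    unfolding recovery_kraus_def ph_def N_def S_def ..
  have N: "cnj N * N = of_nat CARD('a) ^ 3"
    unfolding N_def by (simp add: power3_eq_cube algebra_simps flip: of_real_mult)
  have ph: "cnj ph * ph = 1"
    unfolding ph_def cnj_chi by (simp flip: chi_add)
  have "cnj (chi (c * z + c * dy) * (if y = (\<lambda>j. strip z x j - c * \<gamma> j) then 1 else 0))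
        * (chi (c' * z + c' * dy') * (if y' = (\<lambda>j. strip z x j - c' * \<gamma> j) then 1 else 0))
      = chi (z * (c' - c)) * chi (c' * dy' - c * dy)
        * (if strip z x = (\<lambda>j. y j + c * \<gamma> j) then 1 else 0)
        * (if y' = (\<lambda>j. y j + (c - c') * \<gamma> j) then 1 else 0)" for c c'
    by (rule cnj_kraus_summand_mult)
  then have "cnj (S y) * S y' = (\<Sum>c\<in>UNIV. \<Sum>c'\<in>UNIV. chi (z * (c' - c)) * chi (c' * dy' - c * dy)
        * (if strip z x = (\<lambda>j. y j + c * \<gamma> j) then 1 else 0)
        * (if y' = (\<lambda>j. y j + (c - c') * \<gamma> j) then 1 else 0))"
    unfolding S_def dy_def dy'_def cnj_sum sum_product by simp
  moreover have "cnj (recovery_kraus z x y) * recovery_kraus z x y' = cnj ph * ph / (cnj N * N) * (cnj (S y) * S y')"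
    unfolding K by (simp add: divide_inverse mult_ac)
  ultimately show ?thesis
    by (simp add: N ph)
qed

lemma sum_cnj_recovery_kraus_mult:
  fixes y y' :: "'n \<Rightarrow> 'a"
  assumes y: "y \<in> cfg (I - {i})"
  defines "dy \<equiv> \<Sum>j\<in>UNIV. \<delta> j * y j" and "dy' \<equiv> \<Sum>j\<in>UNIV. \<delta> j * y' j"
  shows "(\<Sum>x\<in>cfg I. cnj (recovery_kraus z x y) * recovery_kraus z x y')
    = (\<Sum>c\<in>UNIV. \<Sum>c'\<in>UNIV. chi (z * (c' - c)) * chi (c' * dy' - c * dy)
        * (if y' = (\<lambda>j. y j + (c - c') * \<gamma> j) then 1 else 0)) / of_nat CARD('a) ^ 2"
proof -
  define G where "G c c' = chi (z * (c' - c)) * chi (c' * dy' - c * dy)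
      * (if y' = (\<lambda>j. y j + (c - c') * \<gamma> j) then 1 else (0::complex))" for c c'
  have count: "(\<Sum>x\<in>cfg I. if strip z x = (\<lambda>j. y j + c * \<gamma> j) then 1 else (0::complex)) = of_nat CARD('a)"
    for c
  proof -
    have "(\<lambda>j. y j + c * \<gamma> j) \<in> cfg (I - {i})"
      using y vanish_outside Z_at_i by (auto simp: cfg_def)
    then have "card {x \<in> cfg I. strip z x = (\<lambda>j. y j + c * \<gamma> j)} = CARD('a)"
      by (rule card_strip_preimage)
    then show ?thesis
      by (simp add: Int_def flip: of_bool_def)
  qed
  have "cnj (recovery_kraus z x y) * recovery_kraus z x y'
      = (\<Sum>c\<in>UNIV. \<Sum>c'\<in>UNIV. G c c' * (if strip z x = (\<lambda>j. y j + c * \<gamma> j) then 1 else 0))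
        / of_nat CARD('a) ^ 3" for x
    unfolding cnj_recovery_kraus_mult[of z x y y', folded dy_def dy'_def] G_def by (simp add: mult_ac)
  then have "(\<Sum>x\<in>cfg I. cnj (recovery_kraus z x y) * recovery_kraus z x y')
      = (\<Sum>x\<in>cfg I. \<Sum>c\<in>UNIV. \<Sum>c'\<in>UNIV. G c c' * (if strip z x = (\<lambda>j. y j + c * \<gamma> j) then 1 else 0))
        / of_nat CARD('a) ^ 3"
    by (simp only: sum_divide_distrib)
  also have "(\<Sum>x\<in>cfg I. \<Sum>c\<in>UNIV. \<Sum>c'\<in>UNIV. G c c' * (if strip z x = (\<lambda>j. y j + c * \<gamma> j) then 1 else 0))
      = (\<Sum>c\<in>UNIV. \<Sum>c'\<in>UNIV. G c c' * (\<Sum>x\<in>cfg I. if strip z x = (\<lambda>j. y j + c * \<gamma> j) then 1 else 0))"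
    by (simp only: sum.swap[of _ "cfg I"] sum_distrib_left)
  also have "\<dots> = (\<Sum>c\<in>UNIV. \<Sum>c'\<in>UNIV. G c c') * of_nat CARD('a)"
    by (simp only: count sum_distrib_right)
  finally show ?thesis
    unfolding G_def by (simp add: power2_eq_square power3_eq_cube)
qed

lemma recovery_kraus_complete:
  assumes "y \<in> cfg (I - {i})"
  shows "(\<Sum>z\<in>UNIV. \<Sum>x\<in>cfg I. cnj (recovery_kraus z x y) * recovery_kraus z x y') = (if y = y' then 1 else 0)"
proof -
  define dy where "dy = (\<Sum>j\<in>UNIV. \<delta> j * y j)"
  define dy' where "dy' = (\<Sum>j\<in>UNIV. \<delta> j * y' j)"
  define B where "B c c' = chi (c' * dy' - c * dy) * (if y' = (\<lambda>j. y j + (c - c') * \<gamma> j) then 1 else (0::complex))"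
    for c c'
  have orth: "(\<Sum>z\<in>UNIV. chi (z * (c' - c))) * B c c' = (if c' = c then of_nat CARD('a) * (if y = y' then 1 else 0) else 0)"
    for c c'
    by (auto simp: B_def dy_def dy'_def sum_chi_mult)
  have "(\<Sum>z\<in>UNIV. \<Sum>x\<in>cfg I. cnj (recovery_kraus z x y) * recovery_kraus z x y')
      = (\<Sum>z\<in>UNIV. \<Sum>c\<in>UNIV. \<Sum>c'\<in>UNIV. chi (z * (c' - c)) * B c c') / of_nat CARD('a) ^ 2"
    unfolding sum_cnj_recovery_kraus_mult[OF assms] B_def dy_def dy'_def sum_divide_distrib
    by (simp add: mult.assoc)
  also have "(\<Sum>z\<in>UNIV. \<Sum>c\<in>UNIV. \<Sum>c'\<in>UNIV. chi (z * (c' - c)) * B c c')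
      = (\<Sum>c\<in>UNIV. \<Sum>z\<in>UNIV. \<Sum>c'\<in>UNIV. chi (z * (c' - c)) * B c c')"
    by (rule sum.swap)
  also have "\<dots> = (\<Sum>c\<in>UNIV. \<Sum>c'\<in>UNIV. \<Sum>z\<in>UNIV. chi (z * (c' - c)) * B c c')"
    by (rule sum.cong[OF refl], rule sum.swap)
  also have "\<dots> = (\<Sum>c\<in>UNIV. \<Sum>c'\<in>UNIV. (\<Sum>z\<in>UNIV. chi (z * (c' - c))) * B c c')"
    by (simp only: sum_distrib_right)
  finally show ?thesis
    by (simp add: orth power2_eq_square)
qed

lemma recovery_kraus_row:
  fixes \<psi> :: "('n, 'a) mat"
  assumes herm: "\<And>a b. \<psi> b a = cnj (\<psi> a b)"
    and P_fixes: "\<And>a c. pauli (scale_pauli c (\<alpha>, \<beta>)) (\<lambda>x. \<psi> x a) = (\<lambda>x. \<psi> x a)"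
    and Q_fixes: "\<And>a c. pauli (scale_pauli c (\<gamma>, \<delta>)) (\<lambda>x. \<psi> x a) = (\<lambda>x. \<psi> x a)"
  shows "(\<Sum>u\<in>cfg (I - {i}). \<psi> a (merge (- {i}) (merge (I - {i}) u x) t) * cnj (recovery_kraus z (restr I x) u))
       = (if t i = z then \<psi> a x / of_real (sqrt (real CARD('a))) else 0)"
proof -
  have "(\<Sum>u\<in>cfg (I - {i}). \<psi> a (merge (- {i}) (merge (I - {i}) u x) t) * cnj (recovery_kraus z (restr I x) u))
      = cnj (\<Sum>u\<in>cfg (I - {i}). recovery_kraus z (restr I x) u * \<psi> (merge (- {i}) (merge (I - {i}) u x) t) a)"
    by (simp add: herm[of _ a] mult.commute)
  also have "\<dots> = cnj (if t i = z then \<psi> x a / of_real (sqrt (real CARD('a))) else 0)"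
    using recovery_kraus_column[of "\<lambda>w. \<psi> w a", OF P_fixes Q_fixes] by simp
  also have "\<dots> = (if t i = z then \<psi> a x / of_real (sqrt (real CARD('a))) else 0)"
    by (simp add: herm[of a x])
  finally show ?thesis .
qed

lemma recovery_kraus_sandwich:
  fixes \<psi> :: "('n, 'a) mat"
  assumes herm: "\<And>a b. \<psi> b a = cnj (\<psi> a b)"
    and P_fixes: "\<And>a c. pauli (scale_pauli c (\<alpha>, \<beta>)) (\<lambda>x. \<psi> x a) = (\<lambda>x. \<psi> x a)"
    and Q_fixes: "\<And>a c. pauli (scale_pauli c (\<gamma>, \<delta>)) (\<lambda>x. \<psi> x a) = (\<lambda>x. \<psi> x a)"
  shows "(\<Sum>u\<in>cfg (I - {i}). \<Sum>u'\<in>cfg (I - {i}). recovery_kraus z (restr I x) u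
          * reduced (- {i}) \<psi> (merge (I - {i}) u x) (merge (I - {i}) u' x')
          * cnj (recovery_kraus z (restr I x') u'))
       = \<psi> x x' / of_nat CARD('a)"
proof -
  define G :: "('n \<Rightarrow> 'a) \<Rightarrow> ('n \<Rightarrow> 'a) \<Rightarrow> ('n \<Rightarrow> 'a) \<Rightarrow> 'n \<Rightarrow> 'a"
    where "G x t u = merge (- {i}) (merge (I - {i}) u x) t" for x t u
  define s :: complex where "s = of_real (sqrt (real CARD('a)))"
  have "(\<Sum>u\<in>cfg (I - {i}). \<Sum>u'\<in>cfg (I - {i}). recovery_kraus z (restr I x) u
          * reduced (- {i}) \<psi> (merge (I - {i}) u x) (merge (I - {i}) u' x')
          * cnj (recovery_kraus z (restr I x') u'))
      = (\<Sum>t\<in>cfg {i}. \<Sum>u\<in>cfg (I - {i}). recovery_kraus z (restr I x) u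
          * (\<Sum>u'\<in>cfg (I - {i}). \<psi> (G x t u) (G x' t u') * cnj (recovery_kraus z (restr I x') u')))"
    unfolding reduced_def G_def
    by (simp add: sum_distrib_left sum_distrib_right mult.assoc sum.swap[of _ "cfg (I - {i})" "cfg {i}"])
  also have "\<dots> = (\<Sum>t\<in>cfg {i}. \<Sum>u\<in>cfg (I - {i}). recovery_kraus z (restr I x) u
        * (if t i = z then \<psi> (G x t u) x' / s else 0))"
    unfolding G_def s_def by (simp only: recovery_kraus_row[OF herm P_fixes Q_fixes])
  also have "\<dots> = (\<Sum>t\<in>cfg {i}. if t i = z
      then (\<Sum>u\<in>cfg (I - {i}). recovery_kraus z (restr I x) u * \<psi> (G x t u) x') / s else 0)"
    by (rule sum.cong[OF refl]) (simp add: sum_divide_distrib)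
  also have "\<dots> = (\<Sum>t\<in>cfg {i}. if t i = z then \<psi> x x' / (s * s) else 0)"
    unfolding G_def s_def
    by (rule sum.cong[OF refl]) (simp add: recovery_kraus_column[of "\<lambda>w. \<psi> w x'", OF P_fixes Q_fixes])
  also have "\<dots> = \<psi> x x' / of_nat CARD('a)"
    by (simp add: sum_cfg_singleton s_def flip: of_real_mult)
  finally show ?thesis .
qed

lemma kraus_channel_recovery_kraus:
  assumes "distinct zs" "set zs = UNIV"
  shows "kraus_channel (I - {i}) I (map recovery_kraus zs)"
  unfolding kraus_channel_def
proof (intro ballI)
  fix y y' :: "'n \<Rightarrow> 'a"
  assume "y \<in> cfg (I - {i})"
  have "(\<Sum>K\<leftarrow>map recovery_kraus zs. \<Sum>x\<in>cfg I. cnj (K x y) * K x y')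
      = (\<Sum>z\<in>UNIV. \<Sum>x\<in>cfg I. cnj (recovery_kraus z x y) * recovery_kraus z x y')"
    using assms by (simp add: sum_list_distinct_conv_sum_set o_def)
  then show "(\<Sum>K\<leftarrow>map recovery_kraus zs. \<Sum>x\<in>cfg I. cnj (K x y) * K x y') = (if y = y' then 1 else 0)"
    using recovery_kraus_complete[OF \<open>y \<in> cfg (I - {i})\<close>] by simp
qed

lemma recovery_kraus_recovers:
  fixes \<psi> :: "('n, 'a) mat"
  assumes herm: "\<And>a b. \<psi> b a = cnj (\<psi> a b)"
    and P_fixes: "\<And>a c. pauli (scale_pauli c (\<alpha>, \<beta>)) (\<lambda>x. \<psi> x a) = (\<lambda>x. \<psi> x a)"
    and Q_fixes: "\<And>a c. pauli (scale_pauli c (\<gamma>, \<delta>)) (\<lambda>x. \<psi> x a) = (\<lambda>x. \<psi> x a)"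
    and zs: "distinct zs" "set zs = UNIV"
  shows "apply_rec I i (map recovery_kraus zs) (reduced (- {i}) \<psi>) = \<psi>"
proof (intro ext)
  fix x x'
  show "apply_rec I i (map recovery_kraus zs) (reduced (- {i}) \<psi>) x x' = \<psi> x x'"
    using zs unfolding apply_rec_def
    by (simp add: sum_list_distinct_conv_sum_set recovery_kraus_sandwich[OF herm P_fixes Q_fixes])
qed

lemma erasure_recovery_channel:
  assumes P_fixes: "\<And>v c. v \<in> C \<Longrightarrow> pauli (scale_pauli c (\<alpha>, \<beta>)) v = v"
    and Q_fixes: "\<And>v c. v \<in> C \<Longrightarrow> pauli (scale_pauli c (\<gamma>, \<delta>)) v = v"
  shows "\<exists>Ks. kraus_channel (I - {i}) I Ks
    \<and> (\<forall>\<psi>. code_state C \<psi> \<longrightarrow> apply_rec I i Ks (reduced (- {i}) \<psi>) = \<psi>)"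
proof -
  obtain zs :: "'a list" where zs: "distinct zs" "set zs = UNIV"
    using finite_distinct_list[of "UNIV :: 'a set"] by auto
  have "kraus_channel (I - {i}) I (map recovery_kraus zs)"
    using zs by (rule kraus_channel_recovery_kraus)
  moreover have "apply_rec I i (map recovery_kraus zs) (reduced (- {i}) \<psi>) = \<psi>"
    if "code_state C \<psi>" for \<psi>
  proof (rule recovery_kraus_recovers[OF _ _ _ zs])
    show "\<psi> b a = cnj (\<psi> a b)" for a b
      by (rule density_hermitian[where \<psi> = \<psi>]) (use that in \<open>simp add: code_state_def\<close>)
    have "(\<lambda>x. \<psi> x a) \<in> C" for a
      using that by (simp add: code_state_def)
    then show "pauli (scale_pauli c (\<alpha>, \<beta>)) (\<lambda>x. \<psi> x a) = (\<lambda>x. \<psi> x a)"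
      and "pauli (scale_pauli c (\<gamma>, \<delta>)) (\<lambda>x. \<psi> x a) = (\<lambda>x. \<psi> x a)" for a c
      by (simp_all only: P_fixes Q_fixes)
  qed
  ultimately show ?thesis
    by blast
qed

end

theorem proposition2p19:
  fixes S :: "(('n::finite \<Rightarrow> 'a::{finite,field}) \<times> ('n \<Rightarrow> 'a)) set"
    and r :: nat
  assumes "stabilizer_group S"
    and "\<forall>i. \<exists>P\<in>S. \<exists>Q\<in>S.
            card (pauli_supp P \<union> pauli_supp Q) \<le> r \<and>
            fst P i = 1 \<and> snd P i = 0 \<and> fst Q i = 0 \<and> snd Q i = 1"
  shows "locally_recoverable (stab_code S) r"
  unfolding locally_recoverable_def
proof
  fix i
  obtain P Q where "P \<in> S" "Q \<in> S" and card: "card (pauli_supp P \<union> pauli_supp Q) \<le> r"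
    and at_i: "fst P i = 1" "snd P i = 0" "fst Q i = 0" "snd Q i = 1"
    using assms(2) by blast
  interpret XZ_pair_at "pauli_supp P \<union> pauli_supp Q" i "fst P" "snd P" "fst Q" "snd Q"
    using at_i by unfold_locales (auto simp: pauli_supp_def)
  have fixes_code: "pauli (scale_pauli c (fst R, snd R)) v = v" if "R \<in> S" "v \<in> stab_code S" for R v c
    unfolding prod.collapse
    by (rule pauli_stab_code[OF that(2) scale_pauli_mem_stabilizer_group[OF assms(1) that(1)]])
  have "\<exists>Ks. kraus_channel (pauli_supp P \<union> pauli_supp Q - {i}) (pauli_supp P \<union> pauli_supp Q) Ks
      \<and> (\<forall>\<psi>. code_state (stab_code S) \<psi>
        \<longrightarrow> apply_rec (pauli_supp P \<union> pauli_supp Q) i Ks (reduced (- {i}) \<psi>) = \<psi>)"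
    by (rule erasure_recovery_channel) (use fixes_code \<open>P \<in> S\<close> \<open>Q \<in> S\<close> in blast)+
  with i_in_I card show "\<exists>I. i \<in> I \<and> card I \<le> r \<and> (\<exists>Ks. kraus_channel (I - {i}) I Ks
      \<and> (\<forall>\<psi>. code_state (stab_code S) \<psi> \<longrightarrow> apply_rec I i Ks (reduced (- {i}) \<psi>) = \<psi>))"
    by blast
qed

end
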